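(* For every $\delta\in(0,1)$ and $w\in(0,1)$ there exists a model class $\mathcal{M}=\{\mu,\nu\}$ of probability measures on $\mathcal{A}^\infty$ (for some finite alphabet $\mathcal{A}$) such that, with prior $w_\mu=w$, $w_\nu=1-w$ and Bayes mixture $\xi$, with $\mu$-probability at least $\delta$ it holds that $$D_\infty > \frac{1}{4\ln 2}\ln\frac{1}{\delta}\left(\ln\frac{1}{\delta}+2\ln\frac{1-w}{w}-3\ln 2\right).$$
   Context: $\mathcal{A}^\infty$ is the set of infinite sequences over $\mathcal{A}$ with the $\sigma$-algebra generated by cylinder sets $\Gamma_x=\{x\omega\}$, $x$ a finite string. For a probability measure $\rho$ write $\rho(x):=\rho(\Gamma_x)$, $\rho(y|x):=\rho(xy)/\rho(x)$. The Bayes mixture is $\xi(A):=w_\mu\mu(A)+w_\nu\nu(A)$. Logarithms are natural. For a finite string $x$, $d_x(\mu,\xi):=\sum_{a\in\mathcal{A}}\mu(a|x)\ln\frac{\mu(a|x)}{\xi(a|x)}$; for $\omega\in\mathcal{A}^\infty$, $d_t(\omega):=d_{\omega_{<t}}(\mu,\xi)$ where $\omega_{<t}=\omega_1\cdots\omega_{t-1}$, and $D_\infty:=\sum_{t=1}^\infty d_t$. *)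

theory Defs
  imports "HOL-Probability.Probability"
begin

text \<open>Sequences over the alphabet are streams of naturals; the alphabet is {..<k}.
  rho(x) is the measure of the cylinder set Gamma_x.\<close>

definition cyl :: "nat stream measure \<Rightarrow> nat list \<Rightarrow> real" where
  "cyl \<rho> x = measure \<rho> {\<omega> \<in> space \<rho>. stake (length x) \<omega> = x}"

definition cond :: "(nat list \<Rightarrow> real) \<Rightarrow> nat \<Rightarrow> nat list \<Rightarrow> real" where
  "cond r a x = r (x @ [a]) / r x"

definition mix :: "real \<Rightarrow> nat stream measure \<Rightarrow> nat stream measure \<Rightarrow> nat list \<Rightarrow> real" where
  "mix w \<mu> \<nu> x = w * cyl \<mu> x + (1 - w) * cyl \<nu> x"

definition dKL :: "nat \<Rightarrow> real \<Rightarrow> nat stream measure \<Rightarrow> nat stream measure \<Rightarrow> nat list \<Rightarrow> real" where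
  "dKL k w \<mu> \<nu> x = (\<Sum>a<k. cond (cyl \<mu>) a x * ln (cond (cyl \<mu>) a x / cond (mix w \<mu> \<nu>) a x))"

text \<open>D_infinity(omega) = sum_{t>=1} d_{omega_{<t}}; index n = t - 1, omega_{<t} = stake n omega.
  Summed in the extended reals (terms are nonnegative; the value may be infinite).\<close>
definition Dinf :: "nat \<Rightarrow> real \<Rightarrow> nat stream measure \<Rightarrow> nat stream measure \<Rightarrow> nat stream \<Rightarrow> ereal" where
  "Dinf k w \<mu> \<nu> \<omega> = (\<Sum>n. ereal (dKL k w \<mu> \<nu> (stake n \<omega>)))"

end

theory Submission
  imports Defs
begin

text \<open>Take for \<open>\<mu>\<close> the fair coin on \<open>{0, 1}\<close> and for \<open>\<nu>\<close> the point mass at the all-zero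
  sequence. Off the all-zero prefixes \<open>\<nu>\<close> vanishes, so \<open>\<xi>\<close> predicts like \<open>\<mu>\<close> and the divergence
  is \<open>0\<close>. After \<open>n\<close> zeros the posterior has almost moved to \<open>\<nu>\<close>: \<open>\<xi>\<close> gives the symbol \<open>1\<close> only
  probability about \<open>w/(1-w) \<cdot> 2^(-n-1)\<close>, whereas \<open>\<mu>\<close> gives it \<open>1/2\<close>, so the divergence there is at
  least \<open>(ln((1-w)/w) + (n-1) ln 2)/2\<close>, linear in \<open>n\<close>. Summing up to \<open>J = \<lfloor>log 2 (1/\<delta>)\<rfloor>\<close> gives a
  quadratic bound exceeding the claimed one on every sequence starting with \<open>J\<close> zeros, an event of
  \<open>\<mu>\<close>-probability \<open>2^(-J) \<ge> \<delta>\<close>.\<close>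

lemma cylinder_in_sets_stream_space:
  "{\<omega>. stake n \<omega> = (x :: nat list)} \<in> sets (stream_space (count_space UNIV))"
proof -
  have "{\<omega> \<in> space (stream_space (count_space UNIV)). stake n \<omega> = x}
          \<in> sets (stream_space (count_space UNIV))"
    by measurable
  then show ?thesis by (simp add: space_stream_space)
qed

lemma sets_stream_space_measure_pmf:
  "sets (stream_space (measure_pmf p)) = sets (stream_space (count_space UNIV))"
  by (rule sets_stream_space_cong) simp

lemma space_stream_space_measure_pmf: "space (stream_space (measure_pmf p)) = UNIV"
  by (simp add: space_stream_space)

lemma emeasure_stream_space_pmf_cylinder:
  fixes p :: "nat pmf"
  shows "emeasure (stream_space (measure_pmf p))
      {\<omega> \<in> space (stream_space (measure_pmf p)). stake (length x) \<omega> = x}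
     = ennreal (prod_list (map (pmf p) x))"
proof (induction x)
  case Nil
  interpret prob_space "stream_space (measure_pmf p)"
    by (rule prob_space.prob_space_stream_space) (rule prob_space_measure_pmf)
  show ?case by (simp add: emeasure_space_1)
next
  case (Cons c x)
  let ?S = "stream_space (measure_pmf p)"
  have "{\<omega> \<in> space ?S. stake (length (c # x)) \<omega> = c # x} \<in> sets ?S"
    using cylinder_in_sets_stream_space[of "length (c # x)" "c # x"]
    by (simp only: sets_stream_space_measure_pmf space_stream_space_measure_pmf) simp
  then have "emeasure ?S {\<omega> \<in> space ?S. stake (length (c # x)) \<omega> = c # x}
      = (\<integral>\<^sup>+t. emeasure ?S {\<omega> \<in> space ?S. t ## \<omega> \<in> {\<omega> \<in> space ?S. stake (length (c # x)) \<omega> = c # x}}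
           \<partial>measure_pmf p)"
    by (rule prob_space.emeasure_stream_space[OF prob_space_measure_pmf])
  also have "\<dots> = (\<integral>\<^sup>+t. emeasure ?S {\<omega> \<in> space ?S. stake (length x) \<omega> = x} * indicator {c} t
                     \<partial>measure_pmf p)"
    by (intro nn_integral_cong) (auto simp: space_stream_space_measure_pmf split: split_indicator)
  also have "\<dots> = emeasure ?S {\<omega> \<in> space ?S. stake (length x) \<omega> = x} * emeasure (measure_pmf p) {c}"
    by (simp add: nn_integral_cmult_indicator)
  also have "\<dots> = ennreal (pmf p c * prod_list (map (pmf p) x))"
    using Cons by (simp add: emeasure_pmf_single ennreal_mult' mult.commute)
  finally show ?case by simp
qed

lemma cyl_stream_space_pmf:
  "cyl (stream_space (measure_pmf (p :: nat pmf))) x = prod_list (map (pmf p) x)"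
  unfolding cyl_def measure_def emeasure_stream_space_pmf_cylinder
  by (subst enn2real_ennreal) (auto intro!: prod_list_nonneg)

lemma stake_sconst: "stake n (sconst c) = replicate n c"
  by (metis shift_replicate_sconst stake_shift take_all order_refl length_replicate
        diff_self_eq_0 stake.simps(1) append_Nil2)

lemma cyl_return_sconst:
  "cyl (return (stream_space (count_space UNIV)) (sconst c)) x = of_bool (x = replicate (length x) c)"
  unfolding cyl_def
  by (subst measure_return)
     (auto simp: cylinder_in_sets_stream_space stake_sconst space_stream_space indicator_def
           simp del: stake_siterate)

lemma stake_eq_replicate_prefix:
  "stake J \<omega> = replicate J c \<Longrightarrow> n \<le> J \<Longrightarrow> stake n \<omega> = replicate n c"
  by (metis min.absorb1 take_replicate take_stake)

lemma dKL_eq_0_if_cyl_eq_0: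
  assumes "w \<noteq> 0" "cyl \<nu> x = 0" "\<And>a. cyl \<nu> (x @ [a]) = 0"
  shows "dKL k w \<mu> \<nu> x = 0"
proof -
  have "cond (mix w \<mu> \<nu>) a x = cond (cyl \<mu>) a x" for a
    using assms by (simp add: cond_def mix_def)
  then show ?thesis
    unfolding dKL_def by (intro sum.neutral) auto
qed

lemma Dinf_measurable:
  "Dinf k w \<mu> \<nu> \<in> borel_measurable (stream_space (count_space UNIV))"
  unfolding Dinf_def by measurable

lemma Dinf_ge_sum_prefix:
  assumes "\<And>x. 0 \<le> dKL k w \<mu> \<nu> x"
  shows "ereal (\<Sum>n<N. dKL k w \<mu> \<nu> (stake n \<omega>)) \<le> Dinf k w \<mu> \<nu> \<omega>"
  unfolding Dinf_def sum_ereal[symmetric] by (rule suminf_upper) (simp add: assms)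

lemma sum_linear_gt_quadratic:
  fixes x l b d :: real
  assumes "0 < x" "0 < l" "0 \<le> d" "(b - l) / 2 \<le> d"
  defines "J \<equiv> nat \<lfloor>x\<rfloor>"
  shows "x * (x * l + 2 * b - 3 * l) / 4 < d + (\<Sum>i<J. (b + real i * l) / 2)"
proof -
  define f where "f = x - real J"
  have f: "0 \<le> f" "f < 1"
    using assms(1) unfolding f_def J_def by linarith+
  have "(\<Sum>i<J. (b + real i * l) / 2) = real J * b / 2 + l * real J * (real J - 1) / 4"
    by (induction J) (auto simp: field_simps)
  then have "4 * (d + (\<Sum>i<J. (b + real i * l) / 2)) - x * (x * l + 2 * b - 3 * l)
      = 4 * d - 2 * (f * (b - l)) + l * (1 - f) * (2 * real J + f)"
    unfolding f_def by (simp add: field_simps)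
  moreover have "f * (b - l) \<le> 2 * d"
  proof -
    have "f * (b - l) \<le> f * (2 * d)"
      using f(1) assms(4) by (intro mult_left_mono) auto
    also have "\<dots> \<le> 2 * d"
      using f assms(3) by (intro mult_left_le_one_le) auto
    finally show ?thesis .
  qed
  moreover have "0 < l * (1 - f) * (2 * real J + f)"
    using f assms(1,2) unfolding f_def by simp
  ultimately show ?thesis by argo
qed

lemma ln_uniform_divergence_nonneg:
  fixes a b :: real
  assumes "0 < a" "0 < b"
  shows "0 \<le> ln ((a + b) / (2 * a)) + ln ((a + b) / (2 * b))"
proof -
  have "4 * a * b \<le> (a + b)\<^sup>2"
    using zero_le_power2[of "a - b"] by (simp add: power2_eq_square algebra_simps)
  then have "1 \<le> (a + b) / (2 * a) * ((a + b) / (2 * b))"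
    using assms by (simp add: power2_eq_square field_simps)
  then show ?thesis
    using assms by (simp add: ln_mult_pos[symmetric])
qed

lemma le_half_power_nat_floor_log:
  fixes \<delta> :: real
  assumes "0 < \<delta>" "\<delta> \<le> 1"
  shows "\<delta> \<le> (1/2) ^ nat \<lfloor>log 2 (1 / \<delta>)\<rfloor>"
proof -
  have "0 \<le> log 2 (1 / \<delta>)"
    using assms by simp
  then have "(2::real) ^ nat \<lfloor>log 2 (1 / \<delta>)\<rfloor> \<le> 2 powr log 2 (1 / \<delta>)"
    by (simp add: powr_realpow[symmetric])
  also have "\<dots> = 1 / \<delta>"
    using assms by simp
  finally show ?thesis
    using assms by (simp add: field_simps power_one_over)
qed

definition fair_bit :: "nat pmf" where
  "fair_bit = pmf_of_set {0, 1}"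

definition coin_stream :: "nat stream measure" where
  "coin_stream = stream_space (measure_pmf fair_bit)"

definition zero_stream :: "nat stream measure" where
  "zero_stream = return (stream_space (count_space UNIV)) (sconst 0)"

lemma prob_space_coin_stream: "prob_space coin_stream"
  unfolding coin_stream_def
  by (rule prob_space.prob_space_stream_space) (rule prob_space_measure_pmf)

lemma prob_space_zero_stream: "prob_space zero_stream"
  unfolding zero_stream_def by (rule prob_space_return) (simp add: space_stream_space)

lemma sets_coin_stream: "sets coin_stream = sets (stream_space (count_space UNIV))"
  unfolding coin_stream_def by (rule sets_stream_space_measure_pmf)

lemma sets_zero_stream: "sets zero_stream = sets (stream_space (count_space UNIV))"
  unfolding zero_stream_def by simp

lemma AE_coin_stream_binary: "AE \<omega> in coin_stream. \<omega> \<in> streams {..<2}"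
proof -
  have "AE \<omega> in stream_space (measure_pmf fair_bit). stream_all (\<lambda>a. a < 2) \<omega>"
    by (rule prob_space.AE_stream_all[OF prob_space_measure_pmf])
       (auto simp: fair_bit_def intro!: AE_pmfI)
  then show ?thesis
    unfolding coin_stream_def by (rule AE_mp) (auto simp: streams_iff_sset)
qed

lemma AE_zero_stream_binary: "AE \<omega> in zero_stream. \<omega> \<in> streams {..<2}"
proof -
  have "Measurable.pred (stream_space (count_space UNIV)) (\<lambda>\<omega>. \<omega> \<in> streams {..<2::nat})"
    by (rule pred_sets2[OF streams_sets measurable_id]) simp
  then show ?thesis
    unfolding zero_stream_def by (subst AE_return) (auto simp: space_stream_space sconst_streams)
qed

lemma cyl_coin_stream: "cyl coin_stream x = (if set x \<subseteq> {0, 1} then (1/2) ^ length x else 0)"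
  unfolding coin_stream_def cyl_stream_space_pmf
  by (induction x) (auto simp: fair_bit_def pmf_of_set)

lemma cyl_zero_stream: "cyl zero_stream x = of_bool (x = replicate (length x) 0)"
  unfolding zero_stream_def by (rule cyl_return_sconst)

lemma dKL_coin_zero_off_zero_prefix:
  assumes "w \<noteq> 0" "x \<noteq> replicate (length x) 0"
  shows "dKL k w coin_stream zero_stream x = 0"
proof (rule dKL_eq_0_if_cyl_eq_0)
  show "cyl zero_stream x = 0"
    using assms(2) by (simp add: cyl_zero_stream)
  show "cyl zero_stream (x @ [a]) = 0" for a
  proof -
    have "x @ [a] \<noteq> replicate (length x) 0 @ [0]"
      using assms(2) by simp
    then show ?thesis
      by (simp add: cyl_zero_stream replicate_append_same)
  qed
qed (fact assms(1))

lemma dKL_coin_zero_zero_prefix: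
  fixes n :: nat
  assumes "0 < w" "w < 1"
  defines "m0 \<equiv> w * (1/2) ^ Suc n + (1 - w)" and "m1 \<equiv> w * (1/2) ^ Suc n"
  shows "dKL 2 w coin_stream zero_stream (replicate n 0)
           = (ln ((m0 + m1) / (2 * m0)) + ln ((m0 + m1) / (2 * m1))) / 2"
proof -
  have coin: "cond (cyl coin_stream) a (replicate n 0) = 1/2" if "a < 2" for a
    using that by (auto simp: cond_def cyl_coin_stream less_2_cases_iff)
  have mix: "mix w coin_stream zero_stream (replicate n 0) = m0 + m1"
    unfolding mix_def m0_def m1_def
    by (simp add: cyl_coin_stream cyl_zero_stream set_replicate_conv_if field_simps)
  have mix0: "mix w coin_stream zero_stream (replicate n 0 @ [0]) = m0"
    unfolding mix_def m0_def
    by (simp add: cyl_coin_stream cyl_zero_stream replicate_append_same set_replicate_conv_if)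
  have "replicate n 0 @ [1] \<noteq> replicate (Suc n) (0::nat)"
    by (metis last_snoc last_replicate nat.simps(3) one_neq_zero)
  then have mix1: "mix w coin_stream zero_stream (replicate n 0 @ [1]) = m1"
    unfolding mix_def m1_def
    by (simp add: cyl_coin_stream cyl_zero_stream set_replicate_conv_if del: replicate_Suc)
  have "0 < m1" "0 < m0"
    using assms(1,2) unfolding m0_def m1_def by (simp_all add: add_pos_pos)
  moreover have "dKL 2 w coin_stream zero_stream (replicate n 0)
      = 1/2 * ln ((1/2) / (m0 / (m0 + m1))) + 1/2 * ln ((1/2) / (m1 / (m0 + m1)))"
    by (simp add: dKL_def numeral_2_eq_2 coin cond_def[of "mix w coin_stream zero_stream"] mix mix0
                  mix1[unfolded One_nat_def])
  ultimately show ?thesis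
    by (simp add: field_simps)
qed

lemma dKL_coin_zero_nonneg:
  assumes "0 < w" "w < 1"
  shows "0 \<le> dKL 2 w coin_stream zero_stream x"
proof (cases "x = replicate (length x) 0")
  case True
  define m1 where "m1 = w * (1/2) ^ Suc (length x)"
  have "0 < m1"
    using assms unfolding m1_def by simp
  then have "0 < m1 + (1 - w)"
    using assms by linarith
  then have "0 \<le> dKL 2 w coin_stream zero_stream (replicate (length x) 0)"
    using dKL_coin_zero_zero_prefix[OF assms, of "length x"]
      ln_uniform_divergence_nonneg[of "m1 + (1 - w)" m1] \<open>0 < m1\<close>
    unfolding m1_def by simp
  then show ?thesis
    using True by metis
next
  case False
  then show ?thesis
    using dKL_coin_zero_off_zero_prefix assms(1) by simp
qed

lemma dKL_coin_zero_zero_prefix_ge: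
  assumes "0 < w" "w < 1"
  shows "(ln ((1 - w) / w) + (real n - 1) * ln 2) / 2
           \<le> dKL 2 w coin_stream zero_stream (replicate n 0)"
proof -
  define m0 where "m0 = w * (1/2) ^ Suc n + (1 - w)"
  define m1 where "m1 = w * (1/2) ^ Suc n"
  have "0 < m1"
    using assms unfolding m1_def by simp
  moreover have "0 < m0"
    using assms unfolding m0_def by (simp add: add_pos_pos)
  ultimately have "ln (1/2) \<le> ln ((m0 + m1) / (2 * m0))"
    by (subst ln_le_cancel_iff) (simp_all add: field_simps)
  then have first: "- ln 2 \<le> ln ((m0 + m1) / (2 * m0))"
    by (simp add: ln_div)
  have "ln ((1 - w) / w) + real n * ln 2 = ln ((1 - w) / w * 2 ^ n)"
    using assms by (subst ln_mult) (auto simp: ln_realpow)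
  also have "\<dots> \<le> ln (1 + (1 - w) / w * 2 ^ n)"
    using assms by (intro ln_mono) auto
  also have "1 + (1 - w) / w * 2 ^ n = (m0 + m1) / (2 * m1)"
    using assms unfolding m0_def m1_def by (simp add: field_simps power_one_over)
  finally have second: "ln ((1 - w) / w) + real n * ln 2 \<le> ln ((m0 + m1) / (2 * m1))" .
  show ?thesis
    using dKL_coin_zero_zero_prefix[OF assms, of n] first second unfolding m0_def m1_def
    by (simp add: field_simps)
qed

lemma sum_dKL_coin_zero_zero_prefix_gt:
  assumes "0 < w" "w < 1" "0 < x"
  shows "x * (x * ln 2 + 2 * ln ((1 - w) / w) - 3 * ln 2) / 4
           < (\<Sum>n<Suc (nat \<lfloor>x\<rfloor>). dKL 2 w coin_stream zero_stream (replicate n 0))"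
proof -
  let ?d = "\<lambda>n. dKL 2 w coin_stream zero_stream (replicate n 0)"
  let ?b = "ln ((1 - w) / w)"
  have "x * (x * ln 2 + 2 * ?b - 3 * ln 2) / 4 < ?d 0 + (\<Sum>i<nat \<lfloor>x\<rfloor>. (?b + real i * ln 2) / 2)"
  proof (rule sum_linear_gt_quadratic)
    show "(?b - ln 2) / 2 \<le> ?d 0"
      using dKL_coin_zero_zero_prefix_ge[OF assms(1,2), of 0] by simp
  qed (simp_all add: assms dKL_coin_zero_nonneg)
  also have "\<dots> \<le> ?d 0 + (\<Sum>i<nat \<lfloor>x\<rfloor>. ?d (Suc i))"
  proof (intro add_left_mono sum_mono)
    fix i
    show "(?b + real i * ln 2) / 2 \<le> ?d (Suc i)"
      using dKL_coin_zero_zero_prefix_ge[OF assms(1,2), of "Suc i"] by simp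
  qed
  also have "\<dots> = (\<Sum>n<Suc (nat \<lfloor>x\<rfloor>). ?d n)"
    by (rule sum.lessThan_Suc_shift[symmetric])
  finally show ?thesis .
qed

lemma Dinf_coin_zero_gt_on_zero_prefix:
  assumes "0 < w" "w < 1" "0 < x" "stake (nat \<lfloor>x\<rfloor>) \<omega> = replicate (nat \<lfloor>x\<rfloor>) 0"
  shows "ereal (x * (x * ln 2 + 2 * ln ((1 - w) / w) - 3 * ln 2) / 4)
           < Dinf 2 w coin_stream zero_stream \<omega>"
proof -
  have "stake n \<omega> = replicate n 0" if "n \<in> {..<Suc (nat \<lfloor>x\<rfloor>)}" for n
    using that by (intro stake_eq_replicate_prefix[OF assms(4)]) simp
  then have "(\<Sum>n<Suc (nat \<lfloor>x\<rfloor>). dKL 2 w coin_stream zero_stream (replicate n 0))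
      = (\<Sum>n<Suc (nat \<lfloor>x\<rfloor>). dKL 2 w coin_stream zero_stream (stake n \<omega>))"
    by (intro sum.cong refl) (simp only:)
  then have "x * (x * ln 2 + 2 * ln ((1 - w) / w) - 3 * ln 2) / 4
      < (\<Sum>n<Suc (nat \<lfloor>x\<rfloor>). dKL 2 w coin_stream zero_stream (stake n \<omega>))"
    using sum_dKL_coin_zero_zero_prefix_gt[OF assms(1-3)] by argo
  then have "ereal (x * (x * ln 2 + 2 * ln ((1 - w) / w) - 3 * ln 2) / 4)
      < ereal (\<Sum>n<Suc (nat \<lfloor>x\<rfloor>). dKL 2 w coin_stream zero_stream (stake n \<omega>))"
    by (simp only: less_ereal.simps(1))
  also have "\<dots> \<le> Dinf 2 w coin_stream zero_stream \<omega>"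
    by (rule Dinf_ge_sum_prefix[OF dKL_coin_zero_nonneg[OF assms(1,2)]])
  finally show ?thesis .
qed

lemma measure_coin_stream_zero_prefix:
  "measure coin_stream {\<omega> \<in> space coin_stream. stake n \<omega> = replicate n 0} = (1/2) ^ n"
  using cyl_coin_stream[of "replicate n 0"] unfolding cyl_def by (simp add: set_replicate_conv_if)

lemma coin_stream_Dinf_gt_prob_ge:
  assumes "0 < \<delta>" "\<delta> < 1" "0 < w" "w < 1"
  defines "x \<equiv> log 2 (1 / \<delta>)"
  shows "\<delta> \<le> measure coin_stream
           {\<omega> \<in> space coin_stream. ereal (x * (x * ln 2 + 2 * ln ((1 - w) / w) - 3 * ln 2) / 4)
                                    < Dinf 2 w coin_stream zero_stream \<omega>}"
    (is "_ \<le> measure _ ?E")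
proof -
  interpret coin: prob_space coin_stream
    by (rule prob_space_coin_stream)
  have "0 < x"
    using assms(1,2) unfolding x_def by simp
  have [measurable]: "Dinf 2 w coin_stream zero_stream \<in> borel_measurable coin_stream"
    using Dinf_measurable by (subst measurable_cong_sets[OF sets_coin_stream refl])
  have "\<delta> \<le> (1/2) ^ nat \<lfloor>x\<rfloor>"
    unfolding x_def using assms(1,2) by (intro le_half_power_nat_floor_log) simp_all
  also have "\<dots> = measure coin_stream {\<omega> \<in> space coin_stream. stake (nat \<lfloor>x\<rfloor>) \<omega> = replicate (nat \<lfloor>x\<rfloor>) 0}"
    by (rule measure_coin_stream_zero_prefix[symmetric])
  also have "\<dots> \<le> measure coin_stream ?E"
    using Dinf_coin_zero_gt_on_zero_prefix[OF assms(3,4) \<open>0 < x\<close>]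
    by (intro coin.finite_measure_mono) auto
  finally show ?thesis .
qed

theorem proposition1:
  fixes \<delta> w :: real
  assumes "0 < \<delta>" "\<delta> < 1" "0 < w" "w < 1"
  shows "\<exists>(k::nat) (\<mu>::nat stream measure) (\<nu>::nat stream measure).
           k > 0 \<and>
           prob_space \<mu> \<and> prob_space \<nu> \<and>
           sets \<mu> = sets (stream_space (count_space UNIV)) \<and>
           sets \<nu> = sets (stream_space (count_space UNIV)) \<and>
           (AE \<omega> in \<mu>. \<omega> \<in> streams {..<k}) \<and>
           (AE \<omega> in \<nu>. \<omega> \<in> streams {..<k}) \<and>
           measure \<mu> {\<omega> \<in> space \<mu>.
              Dinf k w \<mu> \<nu> \<omega> >
                ereal (1 / (4 * ln 2) * ln (1 / \<delta>) *
                       (ln (1 / \<delta>) + 2 * ln ((1 - w) / w) - 3 * ln 2))} \<ge> \<delta>"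
proof -
  define x where "x = log 2 (1 / \<delta>)"
  have "ln (1 / \<delta>) = x * ln 2"
    unfolding x_def log_def by simp
  then have bound_eq: "1 / (4 * ln 2) * ln (1 / \<delta>) * (ln (1 / \<delta>) + 2 * ln ((1 - w) / w) - 3 * ln 2)
      = x * (x * ln 2 + 2 * ln ((1 - w) / w) - 3 * ln 2) / 4"
    by (simp add: field_simps)
  show ?thesis
    unfolding bound_eq
    by (rule exI[of _ 2], rule exI[of _ coin_stream], rule exI[of _ zero_stream])
       (simp add: coin_stream_Dinf_gt_prob_ge[OF assms, folded x_def]
          prob_space_coin_stream prob_space_zero_stream sets_coin_stream sets_zero_stream
          AE_coin_stream_binary AE_zero_stream_binary)
qed

end
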